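(* Let $\gamma \ge 1$ be an integer, let $\Gamma$ be a set of $\gamma$ nodes and let $u \notin \Gamma$ be a further node. Set $p = \frac{1}{1+\gamma}$. Perform $r$ independent runs; in each run, every node of $\Gamma \cup \{u\}$ is dropped independently with probability $p$. For $v \in \Gamma$, let $X_v$ be the number of runs in which the set of dropped nodes of $\Gamma \cup \{u\}$ is exactly $\{v\}$ (a "$1$-dropout of $v$"), and let $\mathbb{E}_1 = r \cdot p\,(1-p)^{\gamma}$ (the common expected value of the $X_v$). Fix $\delta \in (0,1]$. Then there is a constant $C>0$ depending only on $\delta$ such that for every $t>1$ and every $r \ge C\,(\gamma+1)\log(2\gamma t)$ (i.e. $r = \Omega(\gamma \log \gamma t)$), with probability at least $1-\frac{1}{t}$ it holds simultaneously for every $v \in \Gamma$ that $$(1-\delta)\,\mathbb{E}_1 \le X_v \le (1+\delta)\,\mathbb{E}_1 .$$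
   Context: This models a Dropout GNN (DropGNN): the GNN is executed in $r$ independent runs, and in each run each node is removed ("dropped") independently with probability $p$. $\Gamma$ is the "neighborhood of interest" around the node $u$, of size $\gamma = |\Gamma|$ (not counting $u$). For a subset $S \subseteq \Gamma$, an $|S|$-dropout of $S$ in a run means that exactly the nodes of $S$ (and not $u$, nor any other node of $\Gamma$) are dropped in that run. The choice $p = 1/(1+\gamma)$ maximizes the probability $p(1-p)^\gamma$ of a given $1$-dropout. *)

theory Defs
  imports "HOL-Probability.Probability"
begin

definition drop_prob :: "nat \<Rightarrow> real" where
  "drop_prob \<gamma> = 1 / (1 + real \<gamma>)"

definition run_pmf :: "nat set \<Rightarrow> real \<Rightarrow> (nat \<Rightarrow> bool) pmf" where
  "run_pmf V p = Pi_pmf V False (\<lambda>_. bernoulli_pmf p)"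

definition runs_pmf :: "nat set \<Rightarrow> real \<Rightarrow> nat \<Rightarrow> (nat \<Rightarrow> nat \<Rightarrow> bool) pmf" where
  "runs_pmf V p r = Pi_pmf {..<r} (\<lambda>_. False) (\<lambda>_. run_pmf V p)"

definition dropped :: "nat set \<Rightarrow> (nat \<Rightarrow> nat \<Rightarrow> bool) \<Rightarrow> nat \<Rightarrow> nat set" where
  "dropped V \<omega> i = {x \<in> V. \<omega> i x}"

definition one_dropouts :: "nat set \<Rightarrow> nat \<Rightarrow> nat \<Rightarrow> (nat \<Rightarrow> nat \<Rightarrow> bool) \<Rightarrow> nat" where
  "one_dropouts V r v \<omega> = card {i \<in> {..<r}. dropped V \<omega> i = {v}}"

end

theory Submission
  imports Defs
begin

text \<open>
  Whether run \<open>i\<close> is a 1-dropout of \<open>v\<close> depends only on run \<open>i\<close> and happens with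
  probability \<open>q = p (1 - p)\<^sup>\<gamma>\<close>, so each \<open>X\<^sub>v\<close> is binomially distributed with parameters
  \<open>r\<close> and \<open>q\<close>. The multiplicative Chernoff bound gives
  \<open>P(|X\<^sub>v - E\<^sub>1| \<ge> \<delta> E\<^sub>1) \<le> 2 exp(-\<delta>\<^sup>2 E\<^sub>1 / 4)\<close>. As \<open>(1 + 1/\<gamma>)\<^sup>\<gamma> \<le> e \<le> 3\<close> we have
  \<open>q \<ge> 1 / (3 (\<gamma> + 1))\<close>, hence \<open>r \<ge> 12 / \<delta>\<^sup>2 (\<gamma> + 1) ln(2 \<gamma> t)\<close> forces
  \<open>\<delta>\<^sup>2 E\<^sub>1 / 4 \<ge> ln(2 \<gamma> t)\<close>, and a union bound over the \<open>\<gamma>\<close> nodes of \<open>\<Gamma>\<close> leaves a failure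
  probability of at most \<open>1 / t\<close>.
\<close>

lemma exp_le_one_plus_self_plus_square:
  fixes x :: real
  assumes "\<bar>x\<bar> \<le> 1"
  shows "exp x \<le> 1 + x + x\<^sup>2"
proof (cases "x \<ge> 0")
  case True
  then show ?thesis using assms exp_bound by simp
next
  case False
  have "exp x = 1 / exp (-x)" by (simp add: exp_minus field_simps)
  also have "\<dots> \<le> 1 / (1 - x)"
    using exp_ge_add_one_self[of "-x"] False by (intro divide_left_mono) auto
  also have "\<dots> \<le> 1 + x + x\<^sup>2"
  proof -
    have "x * x\<^sup>2 \<le> 0" using False by (simp add: mult_nonpos_nonneg)
    then have "1 \<le> (1 + x + x\<^sup>2) * (1 - x)" by (simp add: algebra_simps power2_eq_square)
    then show ?thesis using False by (simp add: divide_le_eq)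
  qed
  finally show ?thesis .
qed

lemma mult_power_one_minus_in_unit:
  fixes p :: real
  assumes "p \<in> {0..1}"
  shows "p * (1 - p) ^ n \<in> {0..1}"
  using assms by (auto intro!: mult_le_one power_le_one)

lemma measure_pmf_prob_all_ge:
  fixes M :: "'a pmf"
  assumes "finite I" and "\<And>i. i \<in> I \<Longrightarrow> measure_pmf.prob M {x. \<not> P i x} \<le> \<epsilon>"
  shows "1 - real (card I) * \<epsilon> \<le> measure_pmf.prob M {x. \<forall>i\<in>I. P i x}"
proof -
  have "measure_pmf.prob M (UNIV - {x. \<forall>i\<in>I. P i x}) = measure_pmf.prob M (\<Union>i\<in>I. {x. \<not> P i x})"
    by (intro arg_cong[where f = "measure_pmf.prob M"]) auto
  also have "\<dots> \<le> (\<Sum>i\<in>I. measure_pmf.prob M {x. \<not> P i x})"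
    by (rule measure_pmf.finite_measure_subadditive_finite) (use assms(1) in auto)
  also have "\<dots> \<le> real (card I) * \<epsilon>"
    using sum_bounded_above[of I "\<lambda>i. measure_pmf.prob M {x. \<not> P i x}" \<epsilon>] assms(2) by auto
  finally show ?thesis
    using measure_pmf.prob_compl[of "{x. \<forall>i\<in>I. P i x}" M] by simp
qed

lemma expectation_exp_binomial_pmf:
  fixes q l :: real
  assumes "q \<in> {0..1}"
  shows "measure_pmf.expectation (binomial_pmf n q) (\<lambda>k. exp (l * real k)) = (1 - q + q * exp l) ^ n"
proof -
  have "measure_pmf.expectation (binomial_pmf n q) (\<lambda>k. exp (l * real k))
      = (\<Sum>k\<le>n. real (n choose k) * (q * exp l) ^ k * (1 - q) ^ (n - k))"
    using assms by (simp add: expectation_binomial_pmf' power_mult_distrib mult_ac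
                        flip: exp_of_nat_mult)
  also have "\<dots> = (q * exp l + (1 - q)) ^ n"
    by (rule binomial_ring[symmetric])
  finally show ?thesis by (simp add: add.commute)
qed

lemma prob_binomial_pmf_exp_tail:
  fixes q l a :: real
  assumes "q \<in> {0..1}"
  shows "measure_pmf.prob (binomial_pmf n q) {k. l * a \<le> l * real k}
           \<le> exp (real n * q * (exp l - 1) - l * a)"
proof -
  let ?B = "binomial_pmf n q"
  have "measure_pmf.prob ?B {k. l * a \<le> l * real k} = measure_pmf.prob ?B {k. exp (l * a) \<le> exp (l * real k)}"
    by simp
  also have "\<dots> \<le> measure_pmf.expectation ?B (\<lambda>k. exp (l * real k)) / exp (l * a)"
    using integral_Markov_inequality_measure[of ?B "\<lambda>k. exp (l * real k)" UNIV "exp (l * a)"] assms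
    by simp
  also have "\<dots> = (1 - q + q * exp l) ^ n / exp (l * a)"
    using assms by (simp add: expectation_exp_binomial_pmf)
  also have "\<dots> \<le> exp (q * (exp l - 1)) ^ n / exp (l * a)"
  proof (intro divide_right_mono power_mono)
    show "1 - q + q * exp l \<le> exp (q * (exp l - 1))"
      using exp_ge_add_one_self[of "q * (exp l - 1)"] by (simp add: algebra_simps)
  qed (use assms in auto)
  also have "\<dots> = exp (real n * q * (exp l - 1) - l * a)"
    by (simp add: exp_diff mult.assoc flip: exp_of_nat_mult)
  finally show ?thesis .
qed

lemma prob_binomial_pmf_exp_tail_quadratic:
  fixes q l a :: real
  assumes "q \<in> {0..1}" "\<bar>l\<bar> \<le> 1"
  shows "measure_pmf.prob (binomial_pmf n q) {k. l * a \<le> l * real k}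
           \<le> exp (real n * q * (l + l\<^sup>2) - l * a)"
proof -
  have "real n * q * (exp l - 1) \<le> real n * q * (l + l\<^sup>2)"
    using exp_le_one_plus_self_plus_square[OF assms(2)] assms(1) by (intro mult_left_mono) auto
  then have "exp (real n * q * (exp l - 1) - l * a) \<le> exp (real n * q * (l + l\<^sup>2) - l * a)"
    by simp
  with prob_binomial_pmf_exp_tail[OF assms(1)] show ?thesis
    by (rule order_trans)
qed

lemma binomial_pmf_chernoff:
  fixes n :: nat and q \<delta> :: real
  assumes q: "q \<in> {0..1}" and \<delta>: "0 < \<delta>" "\<delta> \<le> 1"
  defines "\<mu> \<equiv> real n * q"
  shows "measure_pmf.prob (binomial_pmf n q) {k. \<delta> * \<mu> \<le> \<bar>real k - \<mu>\<bar>} \<le> 2 * exp (- (\<delta>\<^sup>2 * \<mu> / 4))"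
proof -
  let ?P = "measure_pmf.prob (binomial_pmf n q)"
  define l where "l = \<delta> / 2"
  have l: "0 < l" "l \<le> 1" using \<delta> by (auto simp: l_def)
  let ?U = "{k. l * ((1 + \<delta>) * \<mu>) \<le> l * real k}"
  let ?L = "{k. - l * ((1 - \<delta>) * \<mu>) \<le> - l * real k}"
  have "{k. \<delta> * \<mu> \<le> \<bar>real k - \<mu>\<bar>} \<subseteq> ?U \<union> ?L"
  proof
    fix k assume "k \<in> {k. \<delta> * \<mu> \<le> \<bar>real k - \<mu>\<bar>}"
    then have "(1 + \<delta>) * \<mu> \<le> real k \<or> real k \<le> (1 - \<delta>) * \<mu>"
      by (simp add: abs_le_iff algebra_simps) linarith
    with l show "k \<in> ?U \<union> ?L"
      by (simp add: mult_le_cancel_left)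
  qed
  then have "?P {k. \<delta> * \<mu> \<le> \<bar>real k - \<mu>\<bar>} \<le> ?P (?U \<union> ?L)"
    by (rule measure_pmf.finite_measure_mono) simp
  also have "\<dots> \<le> ?P ?U + ?P ?L"
    by (rule measure_Un_le) simp_all
  also have "\<dots> \<le> exp (\<mu> * (l + l\<^sup>2) - l * ((1 + \<delta>) * \<mu>))
                 + exp (\<mu> * (- l + (- l)\<^sup>2) - (- l) * ((1 - \<delta>) * \<mu>))"
    unfolding \<mu>_def using l by (intro add_mono prob_binomial_pmf_exp_tail_quadratic q) auto
  also have "\<dots> = 2 * exp (- (\<delta>\<^sup>2 * \<mu> / 4))"
  proof -
    \<comment> \<open>the choice \<open>l = \<delta> / 2\<close> makes both exponents equal to \<open>- \<delta>\<^sup>2 \<mu> / 4\<close>\<close>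
    have "\<mu> * (l + l\<^sup>2) - l * ((1 + \<delta>) * \<mu>) = - (\<delta>\<^sup>2 * \<mu> / 4)"
      and "\<mu> * (- l + (- l)\<^sup>2) - (- l) * ((1 - \<delta>) * \<mu>) = - (\<delta>\<^sup>2 * \<mu> / 4)"
      by (simp_all add: l_def field_simps power2_eq_square)
    then show ?thesis by simp
  qed
  finally show ?thesis .
qed

lemma run_pmf_one_dropout:
  assumes V: "finite V" and v: "v \<in> V" and p: "p \<in> {0..1}"
  shows "map_pmf (\<lambda>S. {x\<in>V. S x} = {v}) (run_pmf V p) = bernoulli_pmf (p * (1 - p) ^ (card V - 1))"
    (is "?M = bernoulli_pmf ?q")
proof -
  have "{S. {x\<in>V. S x} = {v}} = Pi V (\<lambda>x. {x = v})"
    using v by (auto simp: Pi_iff set_eq_iff)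
  then have "measure_pmf.prob (run_pmf V p) {S. {x\<in>V. S x} = {v}}
      = (\<Prod>x\<in>V. measure_pmf.prob (bernoulli_pmf p) {x = v})"
    unfolding run_pmf_def using measure_Pi_pmf_Pi[OF V] by simp
  also have "\<dots> = measure_pmf.prob (bernoulli_pmf p) {True}
                  * (\<Prod>x\<in>V - {v}. measure_pmf.prob (bernoulli_pmf p) {False})"
    using V v by (simp add: prod.remove)
  also have "\<dots> = ?q"
    using V v p by (simp add: measure_pmf_single card_Diff_singleton)
  finally have T: "pmf ?M True = ?q"
    by (simp add: pmf_map vimage_def)
  show ?thesis
  proof (rule pmf_eqI)
    fix b :: bool
    show "pmf ?M b = pmf (bernoulli_pmf ?q) b"
      using T mult_power_one_minus_in_unit[OF p, of "card V - 1"]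
      by (cases b) (simp_all add: pmf_False_conv_True)
  qed
qed

lemma one_dropouts_binomial:
  assumes V: "finite V" and v: "v \<in> V" and p: "p \<in> {0..1}"
  shows "map_pmf (one_dropouts V r v) (runs_pmf V p r) = binomial_pmf r (p * (1 - p) ^ (card V - 1))"
proof -
  define q where "q = p * (1 - p) ^ (card V - 1)"
  have q: "q \<in> {0..1}"
    using mult_power_one_minus_in_unit[OF p] unfolding q_def .
  have "map_pmf (\<lambda>\<omega> i. dropped V \<omega> i = {v}) (runs_pmf V p r)
      = Pi_pmf {..<r} False (\<lambda>_. bernoulli_pmf q)"
    using Pi_pmf_map[of "{..<r}" "\<lambda>S. {x\<in>V. S x} = {v}" "\<lambda>_. False" False "\<lambda>_. run_pmf V p"]
    by (simp add: runs_pmf_def dropped_def run_pmf_one_dropout[OF assms] q_def o_def)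
  moreover have "map_pmf (one_dropouts V r v) (runs_pmf V p r)
      = map_pmf (\<lambda>b. card {i\<in>{..<r}. b i}) (map_pmf (\<lambda>\<omega> i. dropped V \<omega> i = {v}) (runs_pmf V p r))"
    by (simp add: one_dropouts_def[abs_def] map_pmf_comp)
  ultimately have "map_pmf (one_dropouts V r v) (runs_pmf V p r)
      = map_pmf (\<lambda>b. card {i\<in>{..<r}. b i}) (Pi_pmf {..<r} False (\<lambda>_. bernoulli_pmf q))"
    by simp
  also have "\<dots> = binomial_pmf r q"
    by (rule binomial_pmf_altdef'[symmetric]) (use q in auto)
  finally show ?thesis unfolding q_def .
qed

lemma one_dropouts_concentration:
  fixes r :: nat and \<delta> :: real
  assumes V: "finite V" "v \<in> V" and p: "p \<in> {0..1}" and \<delta>: "0 < \<delta>" "\<delta> \<le> 1"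
  defines "E \<equiv> real r * p * (1 - p) ^ (card V - 1)"
  shows "measure_pmf.prob (runs_pmf V p r)
           {\<omega>. \<not> ((1 - \<delta>) * E \<le> real (one_dropouts V r v \<omega>) \<and> real (one_dropouts V r v \<omega>) \<le> (1 + \<delta>) * E)}
         \<le> 2 * exp (- (\<delta>\<^sup>2 * E / 4))"
proof -
  let ?q = "p * (1 - p) ^ (card V - 1)"
  have "measure_pmf.prob (runs_pmf V p r)
          {\<omega>. \<not> ((1 - \<delta>) * E \<le> real (one_dropouts V r v \<omega>) \<and> real (one_dropouts V r v \<omega>) \<le> (1 + \<delta>) * E)}
        \<le> measure_pmf.prob (runs_pmf V p r) {\<omega>. \<delta> * E \<le> \<bar>real (one_dropouts V r v \<omega>) - E\<bar>}"
    by (rule measure_pmf.finite_measure_mono) (auto simp: algebra_simps)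
  also have "\<dots> = measure_pmf.prob (map_pmf (one_dropouts V r v) (runs_pmf V p r))
                      {k. \<delta> * E \<le> \<bar>real k - E\<bar>}"
    by (simp add: vimage_def)
  also have "\<dots> = measure_pmf.prob (binomial_pmf r ?q) {k. \<delta> * E \<le> \<bar>real k - E\<bar>}"
    by (simp only: one_dropouts_binomial[OF V p])
  also have "\<dots> \<le> 2 * exp (- (\<delta>\<^sup>2 * E / 4))"
    using binomial_pmf_chernoff[OF mult_power_one_minus_in_unit[OF p] \<delta>, of r]
    by (simp add: E_def mult.assoc)
  finally show ?thesis .
qed

lemma drop_prob_in_unit: "drop_prob \<gamma> \<in> {0..1}"
  by (simp add: drop_prob_def)

lemma one_dropout_prob_ge:
  assumes "\<gamma> \<ge> 1"
  shows "1 / (3 * (real \<gamma> + 1)) \<le> drop_prob \<gamma> * (1 - drop_prob \<gamma>) ^ \<gamma>"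
proof -
  have \<gamma>: "real \<gamma> > 0" using assms by simp
  have "(1 + 1 / real \<gamma>) ^ \<gamma> \<le> 3"
    using exp_ge_one_plus_x_over_n_power_n[of \<gamma> 1] exp_le \<gamma> by simp
  moreover have "(1 - drop_prob \<gamma>) ^ \<gamma> = 1 / (1 + 1 / real \<gamma>) ^ \<gamma>"
    using \<gamma> by (simp add: drop_prob_def field_simps)
  ultimately have "1 / 3 \<le> (1 - drop_prob \<gamma>) ^ \<gamma>"
    using \<gamma> by (simp only:) (intro divide_left_mono, auto intro!: zero_less_power add_pos_nonneg)
  then have "drop_prob \<gamma> * (1 / 3) \<le> drop_prob \<gamma> * (1 - drop_prob \<gamma>) ^ \<gamma>"
    using drop_prob_in_unit by (intro mult_left_mono) auto
  then show ?thesis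
    by (simp add: drop_prob_def ac_simps)
qed

lemma chernoff_union_bound_le_inverse:
  fixes \<gamma> r :: nat and \<delta> t :: real
  assumes \<gamma>: "\<gamma> \<ge> 1" and t: "t > 1" and \<delta>: "\<delta> > 0"
    and r: "12 / \<delta>\<^sup>2 * (real \<gamma> + 1) * ln (2 * real \<gamma> * t) \<le> real r"
  defines "E \<equiv> real r * drop_prob \<gamma> * (1 - drop_prob \<gamma>) ^ \<gamma>"
  shows "real \<gamma> * (2 * exp (- (\<delta>\<^sup>2 * E / 4))) \<le> 1 / t"
proof -
  have "1 * t \<le> real \<gamma> * t"
    using \<gamma> t by (intro mult_right_mono) auto
  then have t': "1 < 2 * real \<gamma> * t"
    using t by linarith
  then have L: "0 < ln (2 * real \<gamma> * t)" by (rule ln_gt_zero)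
  define q where "q = drop_prob \<gamma> * (1 - drop_prob \<gamma>) ^ \<gamma>"
  have q: "0 \<le> q" "1 \<le> 3 * (real \<gamma> + 1) * q"
    using mult_power_one_minus_in_unit[OF drop_prob_in_unit] one_dropout_prob_ge[OF \<gamma>]
    by (simp_all add: q_def field_simps)
  have r': "12 * (real \<gamma> + 1) * ln (2 * real \<gamma> * t) \<le> \<delta>\<^sup>2 * real r"
    using r \<delta> by (simp add: field_simps)
  have "4 * ln (2 * real \<gamma> * t) \<le> 4 * ln (2 * real \<gamma> * t) * (3 * (real \<gamma> + 1) * q)"
    using q L by (simp add: mult_le_cancel_left1)
  also have "\<dots> = 12 * (real \<gamma> + 1) * ln (2 * real \<gamma> * t) * q"
    by (simp add: ac_simps)
  also have "\<dots> \<le> \<delta>\<^sup>2 * real r * q"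
    using r' q by (intro mult_right_mono) auto
  also have "\<dots> = \<delta>\<^sup>2 * E"
    by (simp add: E_def q_def ac_simps)
  finally have "exp (- (\<delta>\<^sup>2 * E / 4)) \<le> exp (- ln (2 * real \<gamma> * t))"
    by simp
  also have "\<dots> = 1 / (2 * real \<gamma> * t)"
    using less_trans[OF zero_less_one t'] by (simp add: exp_minus inverse_eq_divide)
  finally show ?thesis
    using \<gamma> t by (simp add: field_simps)
qed

lemma prob_all_one_dropouts_concentrated:
  fixes \<Gamma> :: "nat set" and r :: nat and \<delta> t :: real
  assumes \<Gamma>: "finite \<Gamma>" "card \<Gamma> \<ge> 1" and u: "u \<notin> \<Gamma>" and t: "t > 1"
    and \<delta>: "0 < \<delta>" "\<delta> \<le> 1"
    and r: "12 / \<delta>\<^sup>2 * (real (card \<Gamma>) + 1) * ln (2 * real (card \<Gamma>) * t) \<le> real r"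
  defines "p \<equiv> drop_prob (card \<Gamma>)" and "V \<equiv> insert u \<Gamma>"
  defines "E \<equiv> real r * p * (1 - p) ^ card \<Gamma>"
  shows "1 - 1 / t \<le> measure_pmf.prob (runs_pmf V p r)
           {\<omega>. \<forall>v\<in>\<Gamma>. (1 - \<delta>) * E \<le> real (one_dropouts V r v \<omega>) \<and>
                     real (one_dropouts V r v \<omega>) \<le> (1 + \<delta>) * E}"
proof -
  have V: "finite V" "card V - 1 = card \<Gamma>"
    using \<Gamma> u by (simp_all add: V_def)
  have "measure_pmf.prob (runs_pmf V p r)
          {\<omega>. \<not> ((1 - \<delta>) * E \<le> real (one_dropouts V r v \<omega>) \<and> real (one_dropouts V r v \<omega>) \<le> (1 + \<delta>) * E)}
        \<le> 2 * exp (- (\<delta>\<^sup>2 * E / 4))" if "v \<in> \<Gamma>" for v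
  proof -
    have "v \<in> V" using that by (simp add: V_def)
    from one_dropouts_concentration[OF V(1) this drop_prob_in_unit \<delta>, where r = r]
    show ?thesis unfolding V(2) E_def p_def .
  qed
  then have "1 - real (card \<Gamma>) * (2 * exp (- (\<delta>\<^sup>2 * E / 4))) \<le> measure_pmf.prob (runs_pmf V p r)
           {\<omega>. \<forall>v\<in>\<Gamma>. (1 - \<delta>) * E \<le> real (one_dropouts V r v \<omega>) \<and>
                     real (one_dropouts V r v \<omega>) \<le> (1 + \<delta>) * E}"
    using \<Gamma> by (intro measure_pmf_prob_all_ge)
  moreover have "real (card \<Gamma>) * (2 * exp (- (\<delta>\<^sup>2 * E / 4))) \<le> 1 / t"
    unfolding E_def p_def using \<Gamma> t \<delta> r by (intro chernoff_union_bound_le_inverse)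
  ultimately show ?thesis by simp
qed

theorem theorem1:
  fixes \<delta> :: real
  assumes "0 < \<delta>" and "\<delta> \<le> 1"
  shows "\<exists>C>0. \<forall>(\<Gamma>::nat set) (u::nat) (t::real) (r::nat).
    finite \<Gamma> \<and> card \<Gamma> \<ge> 1 \<and> u \<notin> \<Gamma> \<and> t > 1 \<and>
    real r \<ge> C * (real (card \<Gamma>) + 1) * ln (2 * real (card \<Gamma>) * t) \<longrightarrow>
    (let \<gamma> = card \<Gamma>; p = drop_prob \<gamma>; V = insert u \<Gamma>;
         E1 = real r * p * (1 - p) ^ \<gamma> in
     measure_pmf.prob (runs_pmf V p r)
       {\<omega>. \<forall>v\<in>\<Gamma>. (1 - \<delta>) * E1 \<le> real (one_dropouts V r v \<omega>) \<and>
                    real (one_dropouts V r v \<omega>) \<le> (1 + \<delta>) * E1}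
     \<ge> 1 - 1 / t)"
  using assms
  by (intro exI[of _ "12 / \<delta>\<^sup>2"]) (auto simp: Let_def intro!: prob_all_one_dropouts_concentrated)

end
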